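(* Assume (A1) and (A2) at time $k$, let $\phi$ satisfy (A3) at time $k$, and suppose that for a constant $\widetilde C_{k|k-1}$ independent of $N$, $\mathbb{E}|\langle\widetilde\pi^N_{k|k-1},\beta_k\rangle-\langle\pi_{k|k-1},\beta_k\rangle|^4\le\widetilde C_{k|k-1}\|\beta_k\|_\infty^4/N^2$ and $\mathbb{E}|\langle\widetilde\pi^N_{k|k-1},\beta_k\phi\rangle-\langle\pi_{k|k-1},\beta_k\phi\rangle|^4\le\widetilde C_{k|k-1}\|\beta_k\|_\infty^4\|\phi\|^4_{k-1,4}/N^2$. Then $$\mathbb{E}\big|\langle\widetilde\pi^N_{k|k},\phi\rangle-\langle\pi_{k|k},\phi\rangle\big|^4\le\widetilde C_{k|k}\frac{\|\phi\|^4_{k-1,4}}{N^2},\qquad \widetilde C_{k|k}^{1/4}=\frac{\widetilde C_{k|k-1}^{1/4}\|\beta_k\|_\infty}{\gamma_k\langle\pi_{k|k-1},\beta_k\rangle}\big(\|\beta_k\phi\|_\infty+\gamma_k\big).$$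
   Context: Notation: for a measure $\nu$ and function $\phi$, $\langle\nu,\phi\rangle=\int\phi\,d\nu$; $\|f\|_\infty$ is the supremum norm. Fixed data: integer $k\ge1$; deterministic vectors $\mathbf{x}_0,\dots,\mathbf{x}_k\in\mathbb{R}^{n_x}$ (defender's true states) and $\mathbf{a}_1,\dots,\mathbf{a}_k\in\mathbb{R}^{n_a}$ (defender's observations); a conditional density $\rho(\mathbf{y}|\mathbf{x})$ in $\mathbf{y}\in\mathbb{R}^{n_y}$; a conditional density $\beta(\mathbf{a}|\hat{\mathbf{x}})$ in $\mathbf{a}\in\mathbb{R}^{n_a}$, $\hat{\mathbf{x}}\in\mathbb{R}^{n_x}$; measurable maps $T_s:\mathbb{R}^{n_x}\times\mathbb{R}^{n_y}\to\mathbb{R}^{n_x}$, $s=1,\dots,k$ (the attacker's forward-filter update $\hat{\mathbf{x}}_s=T_s(\hat{\mathbf{x}}_{s-1},\mathbf{y}_s)$). Write $\beta_s(\hat{\mathbf{x}},\mathbf{y})=\beta(\mathbf{a}_s|\hat{\mathbf{x}})$ and, for a function $\psi$ of $(\hat{\mathbf{x}},\mathbf{y})$, $(\delta_T\rho\psi)_s(\hat{\mathbf{x}}',\mathbf{y}')=\int\psi(T_s(\hat{\mathbf{x}}',\mathbf{y}),\mathbf{y})\rho(\mathbf{y}|\mathbf{x}_s)\,d\mathbf{y}$ (abbreviated $\delta_T\rho\psi$). Optimal inverse filter: probability measures on $\mathbb{R}^{n_x}\times\mathbb{R}^{n_y}$ defined from $\pi_{0|0}=\pi_0$ by $\langle\pi_{s|s-1},\psi\rangle=\langle\pi_{s-1|s-1},\delta_T\rho\psi\rangle$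 and $\langle\pi_{s|s},\psi\rangle=\langle\pi_{s|s-1},\beta_s\psi\rangle/\langle\pi_{s|s-1},\beta_s\rangle$. I-PF with $N$ particles and thresholds $\gamma_s>0$: draw $\hat{\mathbf{x}}^i_0$ i.i.d. from a given distribution $\widetilde\pi^x_0$ and, independently, $\mathbf{y}^i_0$ i.i.d. from $\rho(\cdot|\mathbf{x}_0)$, $i=1,\dots,N$; $\pi_0$ is the (product) law of $(\hat{\mathbf{x}}^i_0,\mathbf{y}^i_0)$ and $\pi^N_{0|0}=\frac1N\sum_i\delta_{(\hat{\mathbf{x}}^i_0,\mathbf{y}^i_0)}$. For $s\ge1$, given particles $(\hat{\mathbf{x}}^i_{s-1},\mathbf{y}^i_{s-1})$: (1) draw conditionally i.i.d. $\bar{\mathbf{y}}^i_s\sim\rho(\cdot|\mathbf{x}_s)$ and set $\bar{\hat{\mathbf{x}}}^i_s=T_s(\hat{\mathbf{x}}^i_{s-1},\bar{\mathbf{y}}^i_s)$; (2) if $\frac1N\sum_i\beta(\mathbf{a}_s|\bar{\hat{\mathbf{x}}}^i_s)\ge\gamma_s$, accept and set $(\tilde{\hat{\mathbf{x}}}^i_s,\tilde{\mathbf{y}}^i_s)=(\bar{\hat{\mathbf{x}}}^i_s,\bar{\mathbf{y}}^i_s)$; otherwise redo (1) independently; (3) set $\widetilde\pi^N_{s|s-1}=\frac1N\sum_i\delta_{(\tilde{\hat{\mathbf{x}}}^i_s,\tilde{\mathbf{y}}^i_s)}$, weights $\omega^i_s=\beta(\mathbf{a}_s|\tilde{\hat{\mathbf{x}}}^i_s)/\sum_j\beta(\mathbf{a}_s|\tilde{\hat{\mathbf{x}}}^j_s)$,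 $\widetilde\pi^N_{s|s}=\sum_i\omega^i_s\delta_{(\tilde{\hat{\mathbf{x}}}^i_s,\tilde{\mathbf{y}}^i_s)}$; (4) draw $N$ conditionally i.i.d. $(\hat{\mathbf{x}}^i_s,\mathbf{y}^i_s)\sim\widetilde\pi^N_{s|s}$ and set $\pi^N_{s|s}=\frac1N\sum_i\delta_{(\hat{\mathbf{x}}^i_s,\mathbf{y}^i_s)}$. Expectations $\mathbb{E}$ are over the particle randomness. Norm: $\|\phi\|_{s,4}=\max\{1,\max_{0\le r\le s}\langle\pi_{r|r},|\phi|^4\rangle^{1/4}\}$. Assumptions: (A1) for $s=1,\dots,k$, $\langle\pi_{s|s-1},\beta_s\rangle>0$ and $0<\gamma_s<\langle\pi_{s|s-1},\beta_s\rangle$. (A2) $\beta(\mathbf{a}_s|\cdot)$ and $\rho(\cdot|\mathbf{x}_s)$ are bounded for $s=1,\dots,k$. (A3) for $s=1,\dots,k$, $\sup_{(\hat{\mathbf{x}},\mathbf{y})}|\phi(\hat{\mathbf{x}},\mathbf{y})|^4\beta(\mathbf{a}_s|\hat{\mathbf{x}})<\infty$. By construction (step (2)), $\langle\widetilde\pi^N_{k|k-1},\beta_k\rangle\ge\gamma_k$. *)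

theory Defs
  imports "HOL-Probability.Probability"
begin

definition ykernel :: "('y::euclidean_space \<Rightarrow> 'x::euclidean_space \<Rightarrow> real) \<Rightarrow> 'x \<Rightarrow> 'y measure" where
  "ykernel rho x = density lborel (\<lambda>y. ennreal (rho y x))"

text \<open>Prediction kernel at time s: (xh',y') maps to the law of (T_s(xh',y), y), y ~ rho(.|x_s).
  Integrating psi against it gives (delta_T rho psi)_s(xh',y').\<close>
definition pred_kernel ::
  "(nat \<Rightarrow> 'x::euclidean_space \<Rightarrow> 'y::euclidean_space \<Rightarrow> 'x) \<Rightarrow> ('y \<Rightarrow> 'x \<Rightarrow> real) \<Rightarrow> (nat \<Rightarrow> 'x)
    \<Rightarrow> nat \<Rightarrow> 'x \<times> 'y \<Rightarrow> ('x \<times> 'y) measure" where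
  "pred_kernel T rho xs s p = distr (ykernel rho (xs s)) borel (\<lambda>y. (T s (fst p) y, y))"

definition corr_step :: "('x \<Rightarrow> real) \<Rightarrow> ('x \<times> 'y) measure \<Rightarrow> ('x \<times> 'y) measure" where
  "corr_step b M = density M (\<lambda>p. ennreal (b (fst p) / (\<integral>q. b (fst q) \<partial>M)))"

text \<open>Optimal inverse filter pi_{s|s}; pi_{0|0} = pi_0 = product of the prior and rho(.|x_0).\<close>
primrec opt_filt ::
  "'x::euclidean_space measure \<Rightarrow> (nat \<Rightarrow> 'x \<Rightarrow> 'y::euclidean_space \<Rightarrow> 'x) \<Rightarrow> ('y \<Rightarrow> 'x \<Rightarrow> real)
    \<Rightarrow> ('a \<Rightarrow> 'x \<Rightarrow> real) \<Rightarrow> (nat \<Rightarrow> 'x) \<Rightarrow> (nat \<Rightarrow> 'a) \<Rightarrow> nat \<Rightarrow> ('x \<times> 'y) measure" where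
  "opt_filt pix0 T rho beta xs as 0 = pix0 \<Otimes>\<^sub>M ykernel rho (xs 0)"
| "opt_filt pix0 T rho beta xs as (Suc s) =
     corr_step (beta (as (Suc s)))
       (opt_filt pix0 T rho beta xs as s \<bind> pred_kernel T rho xs (Suc s))"

text \<open>Optimal prediction pi_{s|s-1} (for s >= 1).\<close>
definition opt_pred ::
  "'x::euclidean_space measure \<Rightarrow> (nat \<Rightarrow> 'x \<Rightarrow> 'y::euclidean_space \<Rightarrow> 'x) \<Rightarrow> ('y \<Rightarrow> 'x \<Rightarrow> real)
    \<Rightarrow> ('a \<Rightarrow> 'x \<Rightarrow> real) \<Rightarrow> (nat \<Rightarrow> 'x) \<Rightarrow> (nat \<Rightarrow> 'a) \<Rightarrow> nat \<Rightarrow> ('x \<times> 'y) measure" where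
  "opt_pred pix0 T rho beta xs as s =
     opt_filt pix0 T rho beta xs as (s - 1) \<bind> pred_kernel T rho xs s"

text \<open>Fourth power of the norm: phi_norm4 = (||phi||_{s,4})^4
  = max 1 (max_{r<=s} <pi_{r|r}, |phi|^4>), valued in ennreal (may be infinite).\<close>
definition phi_norm4 ::
  "'x::euclidean_space measure \<Rightarrow> (nat \<Rightarrow> 'x \<Rightarrow> 'y::euclidean_space \<Rightarrow> 'x) \<Rightarrow> ('y \<Rightarrow> 'x \<Rightarrow> real)
    \<Rightarrow> ('a \<Rightarrow> 'x \<Rightarrow> real) \<Rightarrow> (nat \<Rightarrow> 'x) \<Rightarrow> (nat \<Rightarrow> 'a) \<Rightarrow> ('x \<times> 'y \<Rightarrow> real) \<Rightarrow> nat \<Rightarrow> ennreal" where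
  "phi_norm4 pix0 T rho beta xs as phi s =
     max 1 (Max ((\<lambda>r. \<integral>\<^sup>+p. ennreal (\<bar>phi p\<bar> ^ 4) \<partial>(opt_filt pix0 T rho beta xs as r)) ` {..s}))"

definition sup_norm :: "('b \<Rightarrow> real) \<Rightarrow> real" where
  "sup_norm f = (SUP z. \<bar>f z\<bar>)"

text \<open>Integral of psi against the random empirical measure (1/N) sum_i delta_{P w i}
  (the I-PF prediction tilde pi^N_{k|k-1}).\<close>
definition emp_pred :: "('w \<Rightarrow> nat \<Rightarrow> 'p) \<Rightarrow> nat \<Rightarrow> ('p \<Rightarrow> real) \<Rightarrow> 'w \<Rightarrow> real" where
  "emp_pred P N psi w = (\<Sum>i<N. psi (P w i)) / real N"

text \<open>Integral of phi against the weighted measure tilde pi^N_{k|k} = sum_i omega_i delta_{P w i},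
  omega_i = b(xh_i) / sum_j b(xh_j).\<close>
definition emp_upd :: "('x \<Rightarrow> real) \<Rightarrow> ('w \<Rightarrow> nat \<Rightarrow> 'x \<times> 'y) \<Rightarrow> nat \<Rightarrow> ('x \<times> 'y \<Rightarrow> real) \<Rightarrow> 'w \<Rightarrow> real" where
  "emp_upd b P N phi w =
     (\<Sum>i<N. (b (fst (P w i)) / (\<Sum>j<N. b (fst (P w j)))) * phi (P w i))"

end

theory Submission
  imports Defs
begin

text \<open>The weighted particle estimate is the ratio Y/X of two empirical means, X of the
  likelihood beta_k and Y of beta_k phi, and the exact filter value is the ratio C/A of the
  corresponding integrals against the prediction pi_{k|k-1}. Writing
  Y/X - C/A = (Y - C)/A + Y (A - X)/(X A) and using X \<ge> gamma_k (acceptance step) and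
  |Y| \<le> ||beta_k phi||, the error is a nonnegative combination of |Y - C| and |X - A|; a
  convexity inequality for fourth powers then turns the two assumed fourth-moment bounds
  into the claimed one.\<close>

lemma square_weighted_sum_le:
  fixes a b x y :: real
  assumes "0 \<le> a" "0 \<le> b"
  shows "(a * x + b * y)^2 \<le> (a + b) * (a * x^2 + b * y^2)"
proof -
  have "(a + b) * (a * x^2 + b * y^2) - (a * x + b * y)^2 = a * b * (x - y)^2"
    by (simp add: algebra_simps power2_eq_square)
  moreover have "0 \<le> a * b * (x - y)^2" using assms by simp
  ultimately show ?thesis by linarith
qed

lemma power4_weighted_sum_le:
  fixes a b x y :: real
  assumes "0 \<le> a" "0 \<le> b"
  shows "(a * x + b * y)^4 \<le> (a + b)^3 * (a * x^4 + b * y^4)"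
proof -
  have "(a * x + b * y)^4 = ((a * x + b * y)^2)^2" by simp
  also have "\<dots> \<le> ((a + b) * (a * x^2 + b * y^2))^2"
    using square_weighted_sum_le[OF assms] by (intro power_mono) auto
  also have "\<dots> = (a + b)^2 * (a * x^2 + b * y^2)^2" by (simp add: power_mult_distrib)
  also have "\<dots> \<le> (a + b)^2 * ((a + b) * (a * (x^2)^2 + b * (y^2)^2))"
    using square_weighted_sum_le[OF assms, of "x^2" "y^2"] assms by (intro mult_left_mono) auto
  also have "\<dots> = (a + b)^3 * (a * x^4 + b * y^4)"
    by (simp add: algebra_simps power2_eq_square power3_eq_cube power4_eq_xxxx)
  finally show ?thesis .
qed

lemma ratio_deviation_le:
  fixes x y a c \<gamma> S :: real
  assumes "0 < \<gamma>" "\<gamma> \<le> x" "0 < a" "\<bar>y\<bar> \<le> S"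
  shows "\<bar>y / x - c / a\<bar> \<le> 1 / a * \<bar>y - c\<bar> + S / (\<gamma> * a) * \<bar>x - a\<bar>"
proof -
  have x: "0 < x" using assms by linarith
  have "y / x - c / a = (y - c) / a + y * (a - x) / (x * a)"
    using x assms(3) by (simp add: field_simps)
  then have "\<bar>y / x - c / a\<bar> \<le> \<bar>y - c\<bar> / a + \<bar>y\<bar> * \<bar>x - a\<bar> / (x * a)"
    using x assms(3) abs_triangle_ineq[of "(y - c) / a" "y * (a - x) / (x * a)"]
    by (simp add: abs_mult abs_minus_commute)
  also have "\<bar>y\<bar> * \<bar>x - a\<bar> / (x * a) \<le> S * \<bar>x - a\<bar> / (\<gamma> * a)"
    using assms by (intro frac_le) (auto intro: mult_mono mult_right_mono)
  finally show ?thesis by simp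
qed

lemma ratio_fourth_moment_le:
  fixes M :: "'w measure" and X Y :: "'w \<Rightarrow> real" and \<Phi> :: ennreal
  assumes X: "X \<in> borel_measurable M" and Y: "Y \<in> borel_measurable M"
    and \<gamma>: "0 < \<gamma>" and a: "0 < a" and S: "0 \<le> S"
    and X_ge: "\<forall>w\<in>space M. \<gamma> \<le> X w" and Y_le: "\<forall>w\<in>space M. \<bar>Y w\<bar> \<le> S"
    and e: "0 \<le> e" and \<Phi>: "1 \<le> \<Phi>"
    and moment_X: "(\<integral>\<^sup>+w. ennreal (\<bar>X w - a\<bar> ^ 4) \<partial>M) \<le> ennreal e"
    and moment_Y: "(\<integral>\<^sup>+w. ennreal (\<bar>Y w - c\<bar> ^ 4) \<partial>M) \<le> ennreal e * \<Phi>"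
  shows "(\<integral>\<^sup>+w. ennreal (\<bar>Y w / X w - c / a\<bar> ^ 4) \<partial>M)
           \<le> ennreal (((S + \<gamma>) / (\<gamma> * a)) ^ 4 * e) * \<Phi>"
proof -
  define \<alpha> where "\<alpha> = 1 / a"
  define \<beta> where "\<beta> = S / (\<gamma> * a)"
  define \<kappa> where "\<kappa> = (\<alpha> + \<beta>)^3"
  have \<alpha>: "0 \<le> \<alpha>" and \<beta>: "0 \<le> \<beta>" and \<kappa>: "0 \<le> \<kappa>"
    using a \<gamma> S by (simp_all add: \<alpha>_def \<beta>_def \<kappa>_def)
  have pointwise: "ennreal (\<bar>Y w / X w - c / a\<bar> ^ 4)
      \<le> ennreal (\<kappa> * \<alpha>) * ennreal (\<bar>Y w - c\<bar> ^ 4) + ennreal (\<kappa> * \<beta>) * ennreal (\<bar>X w - a\<bar> ^ 4)"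
    if "w \<in> space M" for w
  proof -
    have "\<bar>Y w / X w - c / a\<bar> ^ 4 \<le> (\<alpha> * \<bar>Y w - c\<bar> + \<beta> * \<bar>X w - a\<bar>) ^ 4"
      using ratio_deviation_le[OF \<gamma> _ a, of "X w" "Y w" S c] X_ge Y_le that
      by (intro power_mono) (auto simp: \<alpha>_def \<beta>_def)
    also have "\<dots> \<le> \<kappa> * (\<alpha> * \<bar>Y w - c\<bar> ^ 4 + \<beta> * \<bar>X w - a\<bar> ^ 4)"
      unfolding \<kappa>_def by (rule power4_weighted_sum_le[OF \<alpha> \<beta>])
    finally show ?thesis using \<alpha> \<beta> \<kappa>
      by (simp add: algebra_simps ennreal_mult[symmetric] ennreal_plus[symmetric] del: ennreal_plus)
  qed
  have "(\<integral>\<^sup>+w. ennreal (\<bar>Y w / X w - c / a\<bar> ^ 4) \<partial>M)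
      \<le> (\<integral>\<^sup>+w. ennreal (\<kappa> * \<alpha>) * ennreal (\<bar>Y w - c\<bar> ^ 4)
                + ennreal (\<kappa> * \<beta>) * ennreal (\<bar>X w - a\<bar> ^ 4) \<partial>M)"
    by (rule nn_integral_mono) (rule pointwise)
  also have "\<dots> = ennreal (\<kappa> * \<alpha>) * (\<integral>\<^sup>+w. ennreal (\<bar>Y w - c\<bar> ^ 4) \<partial>M)
                 + ennreal (\<kappa> * \<beta>) * (\<integral>\<^sup>+w. ennreal (\<bar>X w - a\<bar> ^ 4) \<partial>M)"
    using X Y by (simp add: nn_integral_add nn_integral_cmult)
  also have "\<dots> \<le> ennreal (\<kappa> * \<alpha>) * (ennreal e * \<Phi>) + ennreal (\<kappa> * \<beta>) * (ennreal e * \<Phi>)"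
  proof -
    have "ennreal e \<le> ennreal e * \<Phi>" using mult_left_mono[OF \<Phi>, of "ennreal e"] by simp
    then show ?thesis using moment_X moment_Y
      by (intro add_mono mult_left_mono) (auto intro: order_trans)
  qed
  also have "\<dots> = ennreal (\<kappa> * (\<alpha> + \<beta>) * e) * \<Phi>"
  proof -
    have "0 \<le> \<kappa> * \<alpha> * e" "0 \<le> \<kappa> * \<beta> * e" using \<alpha> \<beta> \<kappa> e by simp_all
    then have "ennreal (\<kappa> * (\<alpha> + \<beta>) * e) = ennreal (\<kappa> * \<alpha>) * ennreal e + ennreal (\<kappa> * \<beta>) * ennreal e"
      using \<alpha> \<beta> \<kappa> e
      by (simp add: distrib_left distrib_right ennreal_plus[symmetric] ennreal_mult[symmetric] del: ennreal_plus)
    then show ?thesis by (simp add: distrib_right mult.assoc)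
  qed
  also have "\<kappa> * (\<alpha> + \<beta>) = ((S + \<gamma>) / (\<gamma> * a)) ^ 4"
  proof -
    have "\<alpha> + \<beta> = (S + \<gamma>) / (\<gamma> * a)" using \<gamma> a by (simp add: \<alpha>_def \<beta>_def field_simps)
    then show ?thesis by (simp add: \<kappa>_def power4_eq_xxxx power3_eq_cube)
  qed
  finally show ?thesis .
qed

lemma abs_le_sup_norm:
  fixes f :: "'b \<Rightarrow> real"
  assumes "bounded (range f)"
  shows "\<bar>f z\<bar> \<le> sup_norm f"
proof -
  obtain B where "\<And>z. \<bar>f z\<bar> \<le> B" using assms unfolding bounded_iff by auto
  then show ?thesis unfolding sup_norm_def by (intro cSUP_upper bdd_aboveI2) auto
qed

lemma sup_norm_nonneg:
  fixes f :: "'b \<Rightarrow> real"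
  assumes "bounded (range f)"
  shows "0 \<le> sup_norm f"
  using abs_le_sup_norm[OF assms, of undefined] by linarith

lemma bounded_mult_of_bounded_power4:
  fixes h \<phi> :: "'p \<Rightarrow> real"
  assumes h_bounded: "bounded (range h)" and h_nonneg: "\<forall>p. 0 \<le> h p"
    and weighted: "bounded (range (\<lambda>p. \<bar>\<phi> p\<bar> ^ 4 * h p))"
  shows "bounded (range (\<lambda>p. h p * \<phi> p))"
proof -
  obtain B where B: "\<And>p. \<bar>h p\<bar> \<le> B" using h_bounded unfolding bounded_iff by auto
  obtain B' where B': "\<And>p. \<bar>\<bar>\<phi> p\<bar> ^ 4 * h p\<bar> \<le> B'" using weighted unfolding bounded_iff by auto
  have "\<bar>h p * \<phi> p\<bar> \<le> max 1 (B' * B ^ 3)" for p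
  proof -
    have "\<bar>h p * \<phi> p\<bar> ^ 4 = (\<bar>\<phi> p\<bar> ^ 4 * h p) * h p ^ 3"
      using h_nonneg by (simp add: abs_mult power_mult_distrib power4_eq_xxxx power3_eq_cube)
    also have "\<dots> \<le> B' * B ^ 3"
      using B[of p] B'[of p] h_nonneg order_trans[OF abs_ge_zero B'[of p]]
      by (intro mult_mono power_mono) auto
    finally have "\<bar>h p * \<phi> p\<bar> ^ 4 \<le> B' * B ^ 3" .
    moreover have "\<bar>h p * \<phi> p\<bar> \<le> \<bar>h p * \<phi> p\<bar> ^ 4" if "1 < \<bar>h p * \<phi> p\<bar>"
      using that by (intro self_le_power) auto
    ultimately show ?thesis by linarith
  qed
  then show ?thesis unfolding bounded_iff by auto
qed

lemma emp_pred_measurable: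
  assumes "f \<in> borel_measurable borel" and "\<forall>i<N. (\<lambda>w. P w i) \<in> measurable M borel"
  shows "emp_pred P N f \<in> borel_measurable M"
  unfolding emp_pred_def[abs_def] using assms
  by (intro borel_measurable_divide borel_measurable_sum measurable_compose[OF _ assms(1)]) auto

lemma abs_emp_pred_le:
  assumes "\<And>p. \<bar>f p\<bar> \<le> S"
  shows "\<bar>emp_pred P N f w\<bar> \<le> S"
proof (cases "N = 0")
  case True
  then show ?thesis using assms[of undefined] by (simp add: emp_pred_def)
next
  case False
  have "\<bar>\<Sum>i<N. f (P w i)\<bar> \<le> (\<Sum>i<N. \<bar>f (P w i)\<bar>)" by (rule sum_abs)
  also have "\<dots> \<le> real N * S" using sum_mono[of "{..<N}", OF assms] by simp
  finally show ?thesis using False by (simp add: emp_pred_def divide_le_eq mult.commute)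
qed

lemma emp_upd_eq_emp_pred_ratio:
  "emp_upd b P N phi w
     = emp_pred P N (\<lambda>p. b (fst p) * phi p) w / emp_pred P N (\<lambda>p. b (fst p)) w"
proof -
  have "emp_upd b P N phi w = (\<Sum>i<N. b (fst (P w i)) * phi (P w i)) / (\<Sum>j<N. b (fst (P w j)))"
    unfolding emp_upd_def by (simp add: sum_divide_distrib)
  then show ?thesis unfolding emp_pred_def by (cases "N = 0") simp_all
qed

lemma integral_corr_step:
  fixes Q :: "('x \<times> 'y) measure"
  assumes b: "(\<lambda>p. b (fst p)) \<in> borel_measurable Q" "\<forall>x. 0 \<le> b x"
    and phi: "phi \<in> borel_measurable Q"
    and pos: "0 < (\<integral>p. b (fst p) \<partial>Q)"
  shows "(\<integral>p. phi p \<partial>corr_step b Q) = (\<integral>p. b (fst p) * phi p \<partial>Q) / (\<integral>p. b (fst p) \<partial>Q)"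
proof -
  let ?A = "\<integral>p. b (fst p) \<partial>Q"
  have "(\<integral>p. phi p \<partial>corr_step b Q) = (\<integral>p. (b (fst p) / ?A) *\<^sub>R phi p \<partial>Q)"
    unfolding corr_step_def
    by (rule integral_density) (use b phi pos in auto)
  also have "\<dots> = (\<integral>p. b (fst p) * phi p / ?A \<partial>Q)" by simp
  finally show ?thesis by simp
qed

lemma opt_filt_eq_corr_step:
  assumes "1 \<le> k"
  shows "opt_filt pix0 T rho beta xs as k
           = corr_step (beta (as k)) (opt_pred pix0 T rho beta xs as k)"
  using assms by (cases k) (simp_all add: opt_pred_def)

text \<open>Only the nonemptiness of the previous filter matters: the bind of an empty measure is the
  empty count space, on which every integral vanishes.\<close>
lemma sets_opt_pred:
  fixes f :: "'x::euclidean_space \<times> 'y::euclidean_space \<Rightarrow> real"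
  assumes "0 < (\<integral>p. f p \<partial>opt_pred pix0 T rho beta xs as s)"
  shows "sets (opt_pred pix0 T rho beta xs as s) = sets borel"
proof (cases "space (opt_filt pix0 T rho beta xs as (s - 1)) = {}")
  case True
  then have "opt_pred pix0 T rho beta xs as s = count_space {}"
    by (simp add: opt_pred_def bind_def)
  then have False using assms by (simp add: Bochner_Integration.integral_empty)
  then show ?thesis ..
next
  case False
  show ?thesis unfolding opt_pred_def
    by (rule sets_bind[OF _ False]) (simp add: pred_kernel_def)
qed

lemma borel_measurable_slice_fst:
  fixes f :: "'a::euclidean_space \<Rightarrow> 'x::euclidean_space \<Rightarrow> real"
  assumes "(\<lambda>(a, x). f a x) \<in> borel_measurable borel"
  shows "(\<lambda>p::'x \<times> 'y::euclidean_space. f a (fst p)) \<in> borel_measurable borel"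
proof -
  have "(\<lambda>x. (a, x)) \<in> borel_measurable borel"
    by (intro borel_measurable_continuous_onI continuous_intros)
  from measurable_compose[OF this assms] have "f a \<in> borel_measurable borel" by simp
  then show ?thesis using measurable_compose[OF measurable_fst] by (simp add: borel_prod[symmetric])
qed

lemma integral_opt_filt:
  fixes phi :: "'x::euclidean_space \<times> 'y::euclidean_space \<Rightarrow> real"
    and beta :: "'a::euclidean_space \<Rightarrow> 'x \<Rightarrow> real"
  assumes k: "1 \<le> k"
    and beta: "(\<lambda>(a, x). beta a x) \<in> borel_measurable borel" "\<forall>a x. 0 \<le> beta a x"
    and phi: "phi \<in> borel_measurable borel"
    and pos: "0 < (\<integral>p. beta (as k) (fst p) \<partial>opt_pred pix0 T rho beta xs as k)"
  shows "(\<integral>p. phi p \<partial>opt_filt pix0 T rho beta xs as k)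
           = (\<integral>p. beta (as k) (fst p) * phi p \<partial>opt_pred pix0 T rho beta xs as k)
             / (\<integral>p. beta (as k) (fst p) \<partial>opt_pred pix0 T rho beta xs as k)"
  unfolding opt_filt_eq_corr_step[OF k]
proof (rule integral_corr_step)
  note sets = measurable_cong_sets[OF sets_opt_pred[OF pos] refl]
  show "(\<lambda>p. beta (as k) (fst p)) \<in> borel_measurable (opt_pred pix0 T rho beta xs as k)"
    using borel_measurable_slice_fst[OF beta(1)] by (simp add: sets)
  show "phi \<in> borel_measurable (opt_pred pix0 T rho beta xs as k)" using phi by (simp add: sets)
qed (use beta(2) pos in auto)

theorem claim1:
  fixes pix0 :: "'x::euclidean_space measure"
    and T :: "nat \<Rightarrow> 'x \<Rightarrow> 'y::euclidean_space \<Rightarrow> 'x"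
    and rho :: "'y \<Rightarrow> 'x \<Rightarrow> real"
    and beta :: "'a::euclidean_space \<Rightarrow> 'x \<Rightarrow> real"
    and xs :: "nat \<Rightarrow> 'x" and as :: "nat \<Rightarrow> 'a" and gamma :: "nat \<Rightarrow> real"
    and k N :: nat and phi :: "'x \<times> 'y \<Rightarrow> real"
    and M :: "'w measure" and P :: "'w \<Rightarrow> nat \<Rightarrow> 'x \<times> 'y" and Ct :: real
  assumes prior: "prob_space pix0" "sets pix0 = sets borel"
    and rho_meas: "(\<lambda>(y, x). rho y x) \<in> borel_measurable borel"
    and rho_nonneg: "\<forall>y x. 0 \<le> rho y x"
    and rho_dens: "\<forall>x. (\<integral>\<^sup>+y. ennreal (rho y x) \<partial>lborel) = 1"
    and beta_meas: "(\<lambda>(a, x). beta a x) \<in> borel_measurable borel"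
    and beta_nonneg: "\<forall>a x. 0 \<le> beta a x"
    and beta_dens: "\<forall>x. (\<integral>\<^sup>+a. ennreal (beta a x) \<partial>lborel) = 1"
    and T_meas: "\<forall>s. (\<lambda>(x, y). T s x y) \<in> borel_measurable borel"
    and k: "1 \<le> k" and N: "1 \<le> N"
    and A1: "0 < (\<integral>p. beta (as k) (fst p) \<partial>(opt_pred pix0 T rho beta xs as k))"
            "0 < gamma k"
            "gamma k < (\<integral>p. beta (as k) (fst p) \<partial>(opt_pred pix0 T rho beta xs as k))"
    and A2: "bounded (range (beta (as k)))" "bounded (range (\<lambda>y. rho y (xs k)))"
    and phi_meas: "phi \<in> borel_measurable borel"
    and A3: "bounded (range (\<lambda>p. \<bar>phi p\<bar> ^ 4 * beta (as k) (fst p)))"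
    and M: "prob_space M"
    and P_meas: "\<forall>i<N. (\<lambda>w. P w i) \<in> measurable M borel"
    and accept: "\<forall>w\<in>space M. gamma k \<le> emp_pred P N (\<lambda>p. beta (as k) (fst p)) w"
    and Ct: "0 \<le> Ct"
    and hyp1: "(\<integral>\<^sup>+w. ennreal (\<bar>emp_pred P N (\<lambda>p. beta (as k) (fst p)) w
                 - (\<integral>p. beta (as k) (fst p) \<partial>(opt_pred pix0 T rho beta xs as k))\<bar> ^ 4) \<partial>M)
             \<le> ennreal (Ct * sup_norm (beta (as k)) ^ 4 / real N ^ 2)"
    and hyp2: "(\<integral>\<^sup>+w. ennreal (\<bar>emp_pred P N (\<lambda>p. beta (as k) (fst p) * phi p) w
                 - (\<integral>p. beta (as k) (fst p) * phi p \<partial>(opt_pred pix0 T rho beta xs as k))\<bar> ^ 4) \<partial>M)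
             \<le> ennreal (Ct * sup_norm (beta (as k)) ^ 4 / real N ^ 2)
                 * phi_norm4 pix0 T rho beta xs as phi (k - 1)"
  shows "(\<integral>\<^sup>+w. ennreal (\<bar>emp_upd (beta (as k)) P N phi w
                 - (\<integral>p. phi p \<partial>(opt_filt pix0 T rho beta xs as k))\<bar> ^ 4) \<partial>M)
         \<le> ennreal ((root 4 Ct * sup_norm (beta (as k))
                 / (gamma k * (\<integral>p. beta (as k) (fst p) \<partial>(opt_pred pix0 T rho beta xs as k)))
                 * (sup_norm (\<lambda>p. beta (as k) (fst p) * phi p) + gamma k)) ^ 4 / real N ^ 2)
             * phi_norm4 pix0 T rho beta xs as phi (k - 1)"
proof -
  let ?b = "\<lambda>p::'x \<times> 'y. beta (as k) (fst p)" and ?g = "\<lambda>p. beta (as k) (fst p) * phi p"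
  let ?A = "\<integral>p. ?b p \<partial>opt_pred pix0 T rho beta xs as k"
    and ?C = "\<integral>p. ?g p \<partial>opt_pred pix0 T rho beta xs as k"
  have b_meas: "?b \<in> borel_measurable borel" by (rule borel_measurable_slice_fst[OF beta_meas])
  have "bounded (range ?b)" using A2(1) by (rule bounded_subset) auto
  then have g_bounded: "bounded (range ?g)"
    by (rule bounded_mult_of_bounded_power4[OF _ _ A3]) (simp add: beta_nonneg)
  have "(\<integral>\<^sup>+w. ennreal (\<bar>emp_pred P N ?g w / emp_pred P N ?b w - ?C / ?A\<bar> ^ 4) \<partial>M)
      \<le> ennreal (((sup_norm ?g + gamma k) / (gamma k * ?A)) ^ 4
                 * (Ct * sup_norm (beta (as k)) ^ 4 / real N ^ 2))
          * phi_norm4 pix0 T rho beta xs as phi (k - 1)"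
  proof (rule ratio_fourth_moment_le[OF _ _ A1(2) A1(1) _ accept _ _ _ hyp1 hyp2])
    show "emp_pred P N ?b \<in> borel_measurable M" "emp_pred P N ?g \<in> borel_measurable M"
      using b_meas phi_meas P_meas by (simp_all add: emp_pred_measurable)
    show "\<forall>w\<in>space M. \<bar>emp_pred P N ?g w\<bar> \<le> sup_norm ?g"
      by (intro ballI abs_emp_pred_le abs_le_sup_norm[OF g_bounded])
    show "0 \<le> sup_norm ?g" by (rule sup_norm_nonneg[OF g_bounded])
    show "0 \<le> Ct * sup_norm (beta (as k)) ^ 4 / real N ^ 2" using Ct by simp
    show "1 \<le> phi_norm4 pix0 T rho beta xs as phi (k - 1)" by (simp add: phi_norm4_def)
  qed
  also have "((sup_norm ?g + gamma k) / (gamma k * ?A)) ^ 4 * (Ct * sup_norm (beta (as k)) ^ 4 / real N ^ 2)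
      = (root 4 Ct * sup_norm (beta (as k)) / (gamma k * ?A) * (sup_norm ?g + gamma k)) ^ 4 / real N ^ 2"
    using Ct by (simp add: power_mult_distrib power_divide real_root_pow_pos2)
  finally show ?thesis
    unfolding emp_upd_eq_emp_pred_ratio integral_opt_filt[OF k beta_meas beta_nonneg phi_meas A1(1)] .
qed

end
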